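(* For every infinite word $w\in A_q^{\omega}$, the image $\mathcal{D}_{p/q}(w)$ exists and is unique.
   Context: Let $p>q>1$ be coprime integers, $A_q=\{0,1,\dots,q-1\}$ and $B=\{p-(2q-1),\dots,p-1\}$. For $n\in\mathbb{N}$ and $a\in\mathbb{Z}$, let $\tau(n,a)=\frac{np+a}{q}$, defined only when $q$ divides $np+a$. For $a\in B$ let $\omega(a)=\{(b,c)\in A_q\times A_q : c-b=a-(p-q)\}$. The transducer $\mathcal{D}_{p/q}$ has state set $\mathbb{N}$, input and output alphabet $A_q$, initial state $0$, and has a transition $n\xrightarrow{b|c}\tau(n,a)$ for every $n\in\mathbb{N}$, every $a\in B$ with $\tau(n,a)$ defined, and every $(b,c)\in\omega(a)$; no other transitions. For a finite word $u$, its image $\mathcal{D}_{p/q}(u)$ is the word $v$ (if it exists) such that there is a path from state $0$ reading input $u$ and producing output $v$. The image of an infinite word $w$ is an infinite word $w'$ such that for every finite prefix $u$ of $w$, $\mathcal{D}_{p/q}(u)$ exists and is a prefix of $w'$. *)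

theory Defs
  imports Main
begin

definition digitsA :: "nat \<Rightarrow> nat set" where
  "digitsA q = {0..<q}"

definition setB :: "nat \<Rightarrow> nat \<Rightarrow> int set" where
  "setB p q = {int p - (2 * int q - 1) .. int p - 1}"

definition tau_defined :: "nat \<Rightarrow> nat \<Rightarrow> nat \<Rightarrow> int \<Rightarrow> bool" where
  "tau_defined p q n a \<longleftrightarrow> int q dvd (int n * int p + a)"

definition tau :: "nat \<Rightarrow> nat \<Rightarrow> nat \<Rightarrow> int \<Rightarrow> int" where
  "tau p q n a = (int n * int p + a) div int q"

definition omega :: "nat \<Rightarrow> nat \<Rightarrow> int \<Rightarrow> (nat \<times> nat) set" where
  "omega p q a = {(b, c). b \<in> digitsA q \<and> c \<in> digitsA q \<and>
                          int c - int b = a - (int p - int q)}"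

(* transition n --b|c--> m of D_{p/q}; the target must be a state, i.e. in \<nat> *)
definition Dtrans :: "nat \<Rightarrow> nat \<Rightarrow> nat \<Rightarrow> nat \<Rightarrow> nat \<Rightarrow> nat \<Rightarrow> bool" where
  "Dtrans p q n b c m \<longleftrightarrow>
     (\<exists>a \<in> setB p q. tau_defined p q n a \<and> (b, c) \<in> omega p q a \<and> int m = tau p q n a)"

inductive Dpath :: "nat \<Rightarrow> nat \<Rightarrow> nat \<Rightarrow> nat list \<Rightarrow> nat list \<Rightarrow> nat \<Rightarrow> bool"
  for p q where
  Dpath_Nil: "Dpath p q n [] [] n"
| Dpath_Cons: "Dtrans p q n b c n' \<Longrightarrow> Dpath p q n' u v m \<Longrightarrow> Dpath p q n (b # u) (c # v) m"

definition fin_image :: "nat \<Rightarrow> nat \<Rightarrow> nat list \<Rightarrow> nat list \<Rightarrow> bool" where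
  "fin_image p q u v \<longleftrightarrow> (\<exists>m. Dpath p q 0 u v m)"

(* infinite words are functions nat => nat; prefix of length k of w is map w [0..<k] *)
definition is_prefix_of_inf :: "nat list \<Rightarrow> (nat \<Rightarrow> nat) \<Rightarrow> bool" where
  "is_prefix_of_inf v w' \<longleftrightarrow> (\<forall>i < length v. v ! i = w' i)"

definition inf_image :: "nat \<Rightarrow> nat \<Rightarrow> (nat \<Rightarrow> nat) \<Rightarrow> (nat \<Rightarrow> nat) \<Rightarrow> bool" where
  "inf_image p q w w' \<longleftrightarrow>
     (\<forall>k. \<exists>v. fin_image p q (map w [0..<k]) v \<and> is_prefix_of_inf v w')"

end

theory Submission
  imports Defs
begin

text \<open>The transducer is deterministic and complete on digits below \<open>q\<close>. A transition
  \<open>n \<midarrow>b|c\<rightarrow> \<tau>(n,a)\<close> forces \<open>a = c - b + p - q\<close>, so \<open>q\<close> divides \<open>n p + a\<close> exactly when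
  \<open>c \<equiv> b - (n + 1) p (mod q)\<close>; this congruence has exactly one solution \<open>c < q\<close>, the
  resulting \<open>a\<close> lies in \<open>B\<close>, and \<open>\<tau>(n,a) \<ge> 0\<close> because \<open>n p + a > -q\<close> when \<open>p \<ge> q\<close>.
  Hence every finite word has exactly one image, the images of prefixes are prefixes of
  images, and the image of an infinite word is the limit of the images of its prefixes.\<close>

lemma Dtrans_deterministic:
  assumes "Dtrans p q n b c m" and "Dtrans p q n b c' m'"
  shows "c = c'" and "m = m'"
proof -
  obtain a where a: "tau_defined p q n a" "(b, c) \<in> omega p q a" "int m = tau p q n a"
    using assms(1) unfolding Dtrans_def by blast
  obtain a' where a': "tau_defined p q n a'" "(b, c') \<in> omega p q a'" "int m' = tau p q n a'"
    using assms(2) unfolding Dtrans_def by blast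
  have digits: "c < q" "c' < q" and diff: "int c - int c' = a - a'"
    using a(2) a'(2) by (auto simp: omega_def digitsA_def)
  have "int q dvd (int n * int p + a) - (int n * int p + a')"
    using a(1) a'(1) unfolding tau_defined_def by (rule dvd_diff)
  then have "int q dvd int c - int c'"
    by (simp add: diff)
  moreover have "\<bar>int c - int c'\<bar> < int q"
    using digits by auto
  ultimately have "int c - int c' = 0"
    using dvd_imp_le_int [of "int c - int c'" "int q"] by linarith
  then show "c = c'" by simp
  with diff have "a = a'" by simp
  with a(3) a'(3) show "m = m'" by simp
qed

lemma Dtrans_total:
  assumes "0 < q" and "q \<le> p" and "b < q"
  obtains c m where "Dtrans p q n b c m"
proof -
  define c where "c = (int b - (int n + 1) * int p) mod int q"
  define a where "a = c - int b + int p - int q"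
  have c: "0 \<le> c" "c < int q"
    using assms(1) by (simp_all add: c_def)
  have "a \<in> setB p q"
    using c assms(3) by (simp add: a_def setB_def)
  have "int q dvd c - (int b - (int n + 1) * int p)"
    unfolding c_def by (simp add: mod_eq_dvd_iff [symmetric])
  then have "int q dvd (c - (int b - (int n + 1) * int p)) - int q"
    by simp
  then have dvd: "int q dvd int n * int p + a"
    by (simp add: a_def algebra_simps)
  have "int n * int p + a > - int q"
    using c assms(2,3) by (simp add: a_def add_nonneg_pos)
  with dvd have nonneg: "0 \<le> int n * int p + a"
    by (smt (verit, best) dvd_div_neg zdiv_eq_0_iff)
  have "(b, nat c) \<in> omega p q a"
    using c assms(3) by (simp add: omega_def digitsA_def a_def)
  with \<open>a \<in> setB p q\<close> dvd nonneg have "Dtrans p q n b (nat c) (nat (tau p q n a))"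
    unfolding Dtrans_def tau_defined_def tau_def
    by (auto simp: assms(1) pos_imp_zdiv_nonneg_iff intro!: bexI [of _ a])
  then show thesis by (rule that)
qed

lemma Dpath_deterministic:
  assumes "Dpath p q n u v m" and "Dpath p q n u v' m'"
  shows "v = v' \<and> m = m'"
  using assms
proof (induction arbitrary: v' m' rule: Dpath.induct)
  case (Dpath_Nil n)
  then show ?case by (cases rule: Dpath.cases) auto
next
  case (Dpath_Cons n b c n' u v m)
  from Dpath_Cons.prems show ?case
  proof (cases rule: Dpath.cases)
    case (Dpath_Cons c' n'' v'')
    then have "c = c'" and "n' = n''"
      using Dtrans_deterministic [OF \<open>Dtrans p q n b c n'\<close>] by auto
    with Dpath_Cons Dpath_Cons.IH show ?thesis by auto
  qed
qed

lemma Dpath_total: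
  assumes "0 < q" and "q \<le> p" and "set u \<subseteq> digitsA q"
  shows "\<exists>v m. Dpath p q n u v m"
  using assms(3)
proof (induction u arbitrary: n)
  case Nil
  then show ?case by (blast intro: Dpath_Nil)
next
  case (Cons b u)
  then have "b < q"
    by (simp add: digitsA_def)
  then obtain c n' where "Dtrans p q n b c n'"
    by (rule Dtrans_total [OF assms(1,2)])
  moreover obtain v m where "Dpath p q n' u v m"
    using Cons by fastforce
  ultimately show ?case by (blast intro: Dpath_Cons)
qed

lemma Dpath_length: "Dpath p q n u v m \<Longrightarrow> length v = length u"
  by (induction rule: Dpath.induct) auto

lemma Dpath_appendE:
  assumes "Dpath p q n (u1 @ u2) v m"
  obtains m1 where "Dpath p q n u1 (take (length u1) v) m1"
  using assms
proof (induction u1 arbitrary: n v)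
  case Nil
  then show ?case by (auto intro: Dpath_Nil)
next
  case (Cons b u1)
  from Cons.prems(2) obtain c n' v' where
    "v = c # v'" "Dtrans p q n b c n'" "Dpath p q n' (u1 @ u2) v' m"
    by (cases rule: Dpath.cases) auto
  with Cons.IH [of n' v'] Cons.prems(1) show ?case
    by (auto intro: Dpath.Dpath_Cons)
qed

definition Dimage :: "nat \<Rightarrow> nat \<Rightarrow> nat list \<Rightarrow> nat list" where
  "Dimage p q u = (THE v. fin_image p q u v)"

lemma fin_image_unique: "fin_image p q u v \<Longrightarrow> fin_image p q u v' \<Longrightarrow> v = v'"
  unfolding fin_image_def using Dpath_deterministic by blast

lemma fin_image_Dimage:
  assumes "0 < q" and "q \<le> p" and "set u \<subseteq> digitsA q"
  shows "fin_image p q u (Dimage p q u)"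
proof -
  have "\<exists>!v. fin_image p q u v"
  proof (rule ex_ex1I)
    show "\<exists>v. fin_image p q u v"
      using Dpath_total [OF assms] unfolding fin_image_def by blast
  qed (rule fin_image_unique)
  then show ?thesis
    unfolding Dimage_def by (rule theI')
qed

lemma fin_image_iff_Dimage:
  assumes "0 < q" and "q \<le> p" and "set u \<subseteq> digitsA q"
  shows "fin_image p q u v \<longleftrightarrow> v = Dimage p q u"
  using fin_image_Dimage [OF assms] fin_image_unique by blast

lemma length_Dimage:
  assumes "0 < q" and "q \<le> p" and "set u \<subseteq> digitsA q"
  shows "length (Dimage p q u) = length u"
proof -
  obtain m where "Dpath p q 0 u (Dimage p q u) m"
    using fin_image_Dimage [OF assms] unfolding fin_image_def ..
  then show ?thesis
    by (rule Dpath_length)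
qed

lemma take_Dimage:
  assumes "0 < q" and "q \<le> p" and "set (u1 @ u2) \<subseteq> digitsA q"
  shows "take (length u1) (Dimage p q (u1 @ u2)) = Dimage p q u1"
proof -
  obtain m where "Dpath p q 0 (u1 @ u2) (Dimage p q (u1 @ u2)) m"
    using fin_image_Dimage [OF assms] unfolding fin_image_def ..
  then obtain m1 where "Dpath p q 0 u1 (take (length u1) (Dimage p q (u1 @ u2))) m1"
    by (rule Dpath_appendE)
  then have "fin_image p q u1 (take (length u1) (Dimage p q (u1 @ u2)))"
    unfolding fin_image_def ..
  moreover have "set u1 \<subseteq> digitsA q"
    using assms(3) by simp
  ultimately show ?thesis
    using fin_image_iff_Dimage [OF assms(1,2)] by blast
qed

lemma ex1_inf_word_extending_prefixes:
  fixes W :: "nat \<Rightarrow> nat list"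
  assumes length: "\<And>k. length (W k) = k" and take: "\<And>i k. i \<le> k \<Longrightarrow> take i (W k) = W i"
  shows "\<exists>!w'. \<forall>k. is_prefix_of_inf (W k) w'"
proof (rule ex1I [of _ "\<lambda>i. W (Suc i) ! i"])
  show "\<forall>k. is_prefix_of_inf (W k) (\<lambda>i. W (Suc i) ! i)"
    unfolding is_prefix_of_inf_def
  proof (intro allI impI)
    fix k i
    assume "i < length (W k)"
    then have "Suc i \<le> k" by (simp add: length)
    then show "W k ! i = W (Suc i) ! i"
      using take [of "Suc i" k] by (metis lessI nth_take)
  qed
next
  fix w'
  assume "\<forall>k. is_prefix_of_inf (W k) w'"
  then show "w' = (\<lambda>i. W (Suc i) ! i)"
    by (auto simp: is_prefix_of_inf_def length)
qed

theorem mainTheorem2: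
  fixes p q :: nat and w :: "nat \<Rightarrow> nat"
  assumes "p > q" and "q > 1" and "coprime p q"
    and "\<forall>i. w i \<in> digitsA q"
  shows "\<exists>!w'. inf_image p q w w'"
proof -
  define W where "W k = Dimage p q (map w [0..<k])" for k
  have q: "0 < q" "q \<le> p"
    using assms(1,2) by simp_all
  have digits: "set (map w [0..<k]) \<subseteq> digitsA q" for k
    using assms(4) by auto
  have "fin_image p q (map w [0..<k]) v \<longleftrightarrow> v = W k" for k v
    unfolding W_def by (rule fin_image_iff_Dimage [OF q digits])
  then have "inf_image p q w w' \<longleftrightarrow> (\<forall>k. is_prefix_of_inf (W k) w')" for w'
    unfolding inf_image_def by simp
  moreover have "length (W k) = k" for k
    using length_Dimage [OF q digits] by (simp add: W_def)
  moreover have "take i (W k) = W i" if "i \<le> k" for i k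
  proof -
    have "map w [0..<k] = map w [0..<i] @ map w [i..<k]"
      using that upt_add_eq_append [of 0 i "k - i"] by simp
    then show ?thesis
      using take_Dimage [OF q, of "map w [0..<i]" "map w [i..<k]"] digits [of k]
      by (simp add: W_def)
  qed
  ultimately show ?thesis
    using ex1_inf_word_extending_prefixes [of W] by simp
qed

end
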